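(* Let $G$ be a graph with no efficient dominating set. Then $|V(G)|\leq\gamma(G)(\Delta(G)+1)-1$. Moreover: (i) Suppose $|V(G)|=\gamma(G)(\Delta(G)+1)-1$. Then (a) for every $\gamma$-set $D$ of $G$ there is exactly one vertex $y_D\in V(G)\setminus D$ such that $D$ is an efficient dominating set of $G-y_D$, and $y_D$ is adjacent to exactly $2$ vertices of $D$; and (b) every vertex belonging to some $\gamma$-set of $G$ has degree $\Delta(G)$. In particular, if every vertex of $G$ belongs to some $\gamma$-set of $G$, then $G$ is regular. (ii) If there exist a $\gamma$-set $D$ of $G$ and a vertex $y\in V(G)\setminus D$ such that $D$ is an efficient dominating set of $G-y$, $y$ is adjacent to exactly $2$ vertices of $D$, and every vertex of $D$ has degree $\Delta(G)$, then $|V(G)|=\gamma(G)(\Delta(G)+1)-1$.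
   Context: All graphs are finite, simple and undirected. For $v\in V(G)$, $N[v]$ is the closed neighborhood of $v$. A set $D\subseteq V(G)$ is dominating if every vertex of $G$ not in $D$ has a neighbor in $D$; $\gamma(G)$ is the minimum size of a dominating set, and a dominating set of size $\gamma(G)$ is a $\gamma$-set. A set $D\subseteq V(H)$ is an efficient dominating set of a graph $H$ if $|N_H[v]\cap D|=1$ for every $v\in V(H)$. $\Delta(G)$ is the maximum degree. *)

theory Defs
  imports Main
begin

definition simple_graph :: "'a set \<Rightarrow> ('a \<Rightarrow> 'a \<Rightarrow> bool) \<Rightarrow> bool" where
  "simple_graph V E \<longleftrightarrow> finite V \<and> (\<forall>x y. E x y \<longrightarrow> x \<in> V \<and> y \<in> V)
     \<and> (\<forall>x y. E x y \<longrightarrow> E y x) \<and> (\<forall>x. \<not> E x x)"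

definition nbhd :: "'a set \<Rightarrow> ('a \<Rightarrow> 'a \<Rightarrow> bool) \<Rightarrow> 'a \<Rightarrow> 'a set" where
  "nbhd V E v = {u \<in> V. E v u}"

definition cnbhd :: "'a set \<Rightarrow> ('a \<Rightarrow> 'a \<Rightarrow> bool) \<Rightarrow> 'a \<Rightarrow> 'a set" where
  "cnbhd V E v = insert v (nbhd V E v)"

definition degree :: "'a set \<Rightarrow> ('a \<Rightarrow> 'a \<Rightarrow> bool) \<Rightarrow> 'a \<Rightarrow> nat" where
  "degree V E v = card (nbhd V E v)"

definition max_degree :: "'a set \<Rightarrow> ('a \<Rightarrow> 'a \<Rightarrow> bool) \<Rightarrow> nat" where
  "max_degree V E = Max (insert 0 (degree V E ` V))"

definition regular :: "'a set \<Rightarrow> ('a \<Rightarrow> 'a \<Rightarrow> bool) \<Rightarrow> bool" where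
  "regular V E \<longleftrightarrow> (\<forall>u\<in>V. \<forall>v\<in>V. degree V E u = degree V E v)"

definition dominating :: "'a set \<Rightarrow> ('a \<Rightarrow> 'a \<Rightarrow> bool) \<Rightarrow> 'a set \<Rightarrow> bool" where
  "dominating V E D \<longleftrightarrow> D \<subseteq> V \<and> (\<forall>v \<in> V - D. \<exists>u \<in> D. E v u)"

definition domination_number :: "'a set \<Rightarrow> ('a \<Rightarrow> 'a \<Rightarrow> bool) \<Rightarrow> nat" where
  "domination_number V E = Min {card D | D. dominating V E D}"

definition gamma_set :: "'a set \<Rightarrow> ('a \<Rightarrow> 'a \<Rightarrow> bool) \<Rightarrow> 'a set \<Rightarrow> bool" where
  "gamma_set V E D \<longleftrightarrow> dominating V E D \<and> card D = domination_number V E"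

definition efficient_dominating :: "'a set \<Rightarrow> ('a \<Rightarrow> 'a \<Rightarrow> bool) \<Rightarrow> 'a set \<Rightarrow> bool" where
  "efficient_dominating V E D \<longleftrightarrow> D \<subseteq> V \<and> (\<forall>v \<in> V. card (cnbhd V E v \<inter> D) = 1)"

definition del_vert_V :: "'a set \<Rightarrow> 'a \<Rightarrow> 'a set" where
  "del_vert_V V y = V - {y}"

definition del_vert_E :: "('a \<Rightarrow> 'a \<Rightarrow> bool) \<Rightarrow> 'a \<Rightarrow> 'a \<Rightarrow> 'a \<Rightarrow> bool" where
  "del_vert_E E y = (\<lambda>a b. E a b \<and> a \<noteq> y \<and> b \<noteq> y)"

end

theory Submission
  imports Defs
begin

text \<open>Count, for a dominating set D, the pairs (v, d) with d \<in> N[v] \<inter> D in two ways. Summing over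
  v, every vertex is dominated at least once, and more than once somewhere since D is not efficient;
  so the count is at least |V| + 1. Summing over d \<in> D, the count is the sum of the |N[d]|, at
  most |D|(\<Delta> + 1). For a \<gamma>-set this gives |V| + 1 \<le> \<gamma>(\<Delta> + 1). In the case of equality both
  estimates are sharp: every d \<in> D has degree \<Delta>, and exactly one vertex y is dominated twice and
  all others once, which says that D is an efficient dominating set of G - y. Two distinct such
  vertices y would make D efficient in G itself. Conversely, if D is efficient in G - y with y
  dominated twice, the count is |V| + 1, and it equals \<gamma>(\<Delta> + 1) when all of D has degree \<Delta>.\<close>

lemma sum_eq_Suc_card_iff:
  fixes f :: "'a \<Rightarrow> nat"
  assumes "finite A" and "\<And>x. x \<in> A \<Longrightarrow> 1 \<le> f x"
  shows "sum f A = Suc (card A) \<longleftrightarrow> (\<exists>y\<in>A. f y = 2 \<and> (\<forall>x\<in>A. x \<noteq> y \<longrightarrow> f x = 1))"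
proof -
  have "sum f A = (\<Sum>x\<in>A. (f x - 1) + 1)"
    using assms(2) by (intro sum.cong) (auto simp: Suc_le_eq)
  also have "\<dots> = sum (\<lambda>x. f x - 1) A + card A"
    by (simp only: sum.distrib card_eq_sum)
  finally have "sum f A = Suc (card A) \<longleftrightarrow> sum (\<lambda>x. f x - 1) A = 1"
    by simp
  also have "\<dots> \<longleftrightarrow> (\<exists>y\<in>A. f y - 1 = 1 \<and> (\<forall>x\<in>A. y \<noteq> x \<longrightarrow> f x - 1 = 0))"
    using assms(1) by (rule sum_eq_1_iff)
  also have "\<dots> \<longleftrightarrow> (\<exists>y\<in>A. f y = 2 \<and> (\<forall>x\<in>A. x \<noteq> y \<longrightarrow> f x = 1))"
    using assms(2) by (intro bex_cong refl conj_cong ball_cong) fastforce+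
  finally show ?thesis .
qed

lemma simple_graph_finite: "simple_graph V E \<Longrightarrow> finite V"
  unfolding simple_graph_def by blast

lemma cnbhd_subset: "v \<in> V \<Longrightarrow> cnbhd V E v \<subseteq> V"
  unfolding cnbhd_def nbhd_def by auto

lemma mem_cnbhd_commute:
  assumes "simple_graph V E" and "u \<in> V" and "v \<in> V"
  shows "u \<in> cnbhd V E v \<longleftrightarrow> v \<in> cnbhd V E u"
  using assms unfolding cnbhd_def nbhd_def simple_graph_def by auto

lemma card_cnbhd:
  assumes "simple_graph V E"
  shows "card (cnbhd V E v) = degree V E v + 1"
proof -
  have "finite (nbhd V E v)" and "v \<notin> nbhd V E v"
    using assms unfolding simple_graph_def nbhd_def by auto
  then show ?thesis unfolding cnbhd_def degree_def by simp
qed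

lemma degree_le_max_degree:
  assumes "simple_graph V E" and "v \<in> V"
  shows "degree V E v \<le> max_degree V E"
  using assms unfolding max_degree_def by (intro Max_ge) (auto dest: simple_graph_finite)

lemma sum_card_cnbhd_Int:
  assumes G: "simple_graph V E" and "D \<subseteq> V"
  shows "(\<Sum>v\<in>V. card (cnbhd V E v \<inter> D)) = (\<Sum>d\<in>D. degree V E d + 1)"
proof -
  have fin: "finite V" "finite D"
    using G assms(2) by (auto dest: simple_graph_finite intro: finite_subset)
  have "(\<Sum>v\<in>V. card (cnbhd V E v \<inter> D)) = (\<Sum>v\<in>V. card {d \<in> D. d \<in> cnbhd V E v})"
    by (intro sum.cong refl arg_cong[where f = card]) blast
  also have "\<dots> = (\<Sum>d\<in>D. card {v \<in> V. d \<in> cnbhd V E v})"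
    unfolding card_eq_sum using fin by (rule sum.swap_restrict)
  also have "\<dots> = (\<Sum>d\<in>D. card (cnbhd V E d))"
    using assms mem_cnbhd_commute[OF G] cnbhd_subset[of _ V E]
    by (intro sum.cong refl arg_cong[where f = card]) blast
  finally show ?thesis by (simp add: card_cnbhd[OF G])
qed

lemma one_le_card_cnbhd_Int:
  assumes G: "simple_graph V E" and D: "dominating V E D" and v: "v \<in> V"
  shows "1 \<le> card (cnbhd V E v \<inter> D)"
proof -
  have "cnbhd V E v \<inter> D \<noteq> {}"
    using D v unfolding dominating_def cnbhd_def nbhd_def by blast
  moreover have "finite (cnbhd V E v \<inter> D)"
    using simple_graph_finite[OF G] cnbhd_subset[OF v] by (blast intro: finite_subset)
  ultimately show ?thesis by (simp add: Suc_le_eq card_gt_0_iff)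
qed

lemma efficient_dominating_del_vert_iff:
  assumes "y \<notin> D" and "D \<subseteq> V"
  shows "efficient_dominating (del_vert_V V y) (del_vert_E E y) D \<longleftrightarrow>
    (\<forall>v\<in>V - {y}. card (cnbhd V E v \<inter> D) = 1)"
proof -
  have "cnbhd (V - {y}) (del_vert_E E y) v \<inter> D = cnbhd V E v \<inter> D" if "v \<noteq> y" for v
    using assms that unfolding cnbhd_def nbhd_def del_vert_E_def by blast
  then show ?thesis
    using assms unfolding efficient_dominating_def del_vert_V_def by auto
qed

lemma gamma_set_exists:
  assumes "simple_graph V E"
  shows "\<exists>D. gamma_set V E D"
proof -
  have "{card D | D. dominating V E D} \<subseteq> {..card V}"
    using simple_graph_finite[OF assms] unfolding dominating_def by (auto intro: card_mono)
  moreover have "dominating V E V"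
    unfolding dominating_def by blast
  ultimately have "domination_number V E \<in> {card D | D. dominating V E D}"
    unfolding domination_number_def by (intro Min_in) (auto intro: finite_subset)
  then show ?thesis unfolding gamma_set_def by fastforce
qed

lemma gamma_setD:
  assumes "gamma_set V E D"
  shows "dominating V E D" and "D \<subseteq> V" and "card D = domination_number V E"
  using assms unfolding gamma_set_def dominating_def by auto

lemma Suc_card_le_sum_card_cnbhd_Int:
  assumes G: "simple_graph V E" and noeff: "\<not> (\<exists>D. efficient_dominating V E D)"
    and D: "dominating V E D"
  shows "Suc (card V) \<le> (\<Sum>v\<in>V. card (cnbhd V E v \<inter> D))"
proof -
  note ge = one_le_card_cnbhd_Int[OF G D]
  have le: "(\<Sum>v\<in>V. 1) \<le> (\<Sum>v\<in>V. card (cnbhd V E v \<inter> D))"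
    using ge by (rule sum_mono)
  have "(\<Sum>v\<in>V. 1) \<noteq> (\<Sum>v\<in>V. card (cnbhd V E v \<inter> D))"
  proof
    assume eq: "(\<Sum>v\<in>V. 1) = (\<Sum>v\<in>V. card (cnbhd V E v \<inter> D))"
    have "\<forall>v\<in>V. card (cnbhd V E v \<inter> D) = 1"
      using sum_mono_inv[OF eq ge _ simple_graph_finite[OF G]] by simp
    then have "efficient_dominating V E D"
      using D unfolding efficient_dominating_def dominating_def by blast
    with noeff show False by blast
  qed
  with le show ?thesis by simp
qed

lemma gamma_set_sum_degree_bounds:
  assumes G: "simple_graph V E" and noeff: "\<not> (\<exists>D. efficient_dominating V E D)"
    and D: "gamma_set V E D"
  shows "Suc (card V) \<le> (\<Sum>d\<in>D. degree V E d + 1)"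
    and "(\<Sum>d\<in>D. degree V E d + 1) \<le> domination_number V E * (max_degree V E + 1)"
proof -
  note dom = gamma_setD(1)[OF D] and DV = gamma_setD(2)[OF D] and card = gamma_setD(3)[OF D]
  show "Suc (card V) \<le> (\<Sum>d\<in>D. degree V E d + 1)"
    using Suc_card_le_sum_card_cnbhd_Int[OF G noeff dom] sum_card_cnbhd_Int[OF G DV] by simp
  have "(\<Sum>d\<in>D. degree V E d + 1) \<le> (\<Sum>d\<in>D. max_degree V E + 1)"
    using DV degree_le_max_degree[OF G] by (intro sum_mono) auto
  then show "(\<Sum>d\<in>D. degree V E d + 1) \<le> domination_number V E * (max_degree V E + 1)"
    by (simp add: card)
qed

lemma del_vert_efficient_unique:
  assumes noeff: "\<not> (\<exists>D. efficient_dominating V E D)" and "D \<subseteq> V"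
    and y: "y \<in> V - D" "efficient_dominating (del_vert_V V y) (del_vert_E E y) D"
    and y': "y' \<in> V - D" "efficient_dominating (del_vert_V V y') (del_vert_E E y') D"
  shows "y = y'"
proof (rule ccontr)
  assume "y \<noteq> y'"
  then have "\<forall>v\<in>V. card (cnbhd V E v \<inter> D) = 1"
    using y y' efficient_dominating_del_vert_iff[OF _ \<open>D \<subseteq> V\<close>] by blast
  with noeff \<open>D \<subseteq> V\<close> show False
    unfolding efficient_dominating_def by blast
qed

lemma sum_card_cnbhd_Int_del_vert:
  assumes G: "simple_graph V E" and "D \<subseteq> V" and y: "y \<in> V - D"
    and eff: "efficient_dominating (del_vert_V V y) (del_vert_E E y) D"
  shows "(\<Sum>v\<in>V. card (cnbhd V E v \<inter> D)) + 1 = card V + card (nbhd V E y \<inter> D)"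
proof -
  have fin: "finite V" using simple_graph_finite[OF G] .
  have "0 < card V" using y fin card_gt_0_iff by blast
  have "(\<Sum>v\<in>V. card (cnbhd V E v \<inter> D))
      = card (cnbhd V E y \<inter> D) + (\<Sum>v\<in>V - {y}. card (cnbhd V E v \<inter> D))"
    using y by (intro sum.remove[OF fin]) blast
  also have "\<dots> = card (nbhd V E y \<inter> D) + (card V - 1)"
    using y eff efficient_dominating_del_vert_iff[OF _ \<open>D \<subseteq> V\<close>] fin
    unfolding cnbhd_def by simp
  finally show ?thesis
    using \<open>0 < card V\<close> by linarith
qed

context
  fixes V :: "'a set" and E :: "'a \<Rightarrow> 'a \<Rightarrow> bool"
  assumes G: "simple_graph V E" and noeff: "\<not> (\<exists>D. efficient_dominating V E D)"
    and extremal: "Suc (card V) = domination_number V E * (max_degree V E + 1)"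
begin

lemma extremal_sum_card_cnbhd_Int:
  assumes "gamma_set V E D"
  shows "(\<Sum>v\<in>V. card (cnbhd V E v \<inter> D)) = Suc (card V)"
    and "(\<Sum>d\<in>D. degree V E d + 1) = domination_number V E * (max_degree V E + 1)"
  using gamma_set_sum_degree_bounds[OF G noeff assms] extremal
    sum_card_cnbhd_Int[OF G gamma_setD(2)[OF assms]] by auto

lemma extremal_degree_eq_max_degree:
  assumes D: "gamma_set V E D" and v: "v \<in> D"
  shows "degree V E v = max_degree V E"
proof -
  note DV = gamma_setD(2)[OF D] and card = gamma_setD(3)[OF D]
  have "(\<Sum>d\<in>D. degree V E d + 1) = (\<Sum>d\<in>D. max_degree V E + 1)"
    using extremal_sum_card_cnbhd_Int(2)[OF D] by (simp add: card)
  moreover have "degree V E d + 1 \<le> max_degree V E + 1" if "d \<in> D" for d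
    using that DV degree_le_max_degree[OF G] by auto
  moreover have "finite D"
    using DV simple_graph_finite[OF G] by (rule finite_subset)
  ultimately have "degree V E v + 1 = max_degree V E + 1"
    using sum_mono_inv[OF _ _ v] by blast
  then show ?thesis by simp
qed

lemma extremal_ex_del_vert_efficient:
  assumes D: "gamma_set V E D"
  shows "\<exists>y\<in>V - D. efficient_dominating (del_vert_V V y) (del_vert_E E y) D"
proof -
  note dom = gamma_setD(1)[OF D] and DV = gamma_setD(2)[OF D]
  define c where "c v = card (cnbhd V E v \<inter> D)" for v
  obtain y where y: "y \<in> V" "c y = 2" and others: "\<And>v. v \<in> V \<Longrightarrow> v \<noteq> y \<Longrightarrow> c v = 1"
    using extremal_sum_card_cnbhd_Int(1)[OF D] one_le_card_cnbhd_Int[OF G dom]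
      sum_eq_Suc_card_iff[OF simple_graph_finite[OF G], of c]
    unfolding c_def by auto
  have "y \<notin> D"
  proof
    assume "y \<in> D"
    \<comment> \<open>then y also lies in N[d] \<inter> D for its second dominator d, which would be dominated twice\<close>
    have "\<not> cnbhd V E y \<inter> D \<subseteq> {y}"
      using y(2) card_mono[of "{y}" "cnbhd V E y \<inter> D"] unfolding c_def by auto
    then obtain d where d: "d \<in> cnbhd V E y \<inter> D" "d \<noteq> y" by blast
    then have "{y, d} \<subseteq> cnbhd V E d \<inter> D"
      using \<open>y \<in> D\<close> mem_cnbhd_commute[OF G y(1)] DV unfolding cnbhd_def by auto
    then have "card {y, d} \<le> c d"
      using simple_graph_finite[OF G] DV unfolding c_def
      by (intro card_mono) (auto intro: finite_subset)
    then have "2 \<le> c d"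
      using d(2) by simp
    with others[of d] d DV show False by auto
  qed
  then show ?thesis
    using y(1) others efficient_dominating_del_vert_iff[OF _ DV] unfolding c_def by auto
qed

lemma extremal_ex1_del_vert_efficient:
  assumes "gamma_set V E D"
  shows "\<exists>!y. y \<in> V - D \<and> efficient_dominating (del_vert_V V y) (del_vert_E E y) D"
  using extremal_ex_del_vert_efficient[OF assms]
    del_vert_efficient_unique[OF noeff gamma_setD(2)[OF assms]] by blast

lemma extremal_card_nbhd_Int_eq_2:
  assumes D: "gamma_set V E D" and y: "y \<in> V - D"
    and eff: "efficient_dominating (del_vert_V V y) (del_vert_E E y) D"
  shows "card (nbhd V E y \<inter> D) = 2"
  using sum_card_cnbhd_Int_del_vert[OF G gamma_setD(2)[OF D] y eff]
    extremal_sum_card_cnbhd_Int(1)[OF D] by simp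

end

lemma extremal_if_del_vert_efficient:
  assumes G: "simple_graph V E" and D: "gamma_set V E D" and y: "y \<in> V - D"
    and "efficient_dominating (del_vert_V V y) (del_vert_E E y) D"
    and "card (nbhd V E y \<inter> D) = 2" and "\<forall>v \<in> D. degree V E v = max_degree V E"
  shows "Suc (card V) = domination_number V E * (max_degree V E + 1)"
  using sum_card_cnbhd_Int_del_vert[OF G gamma_setD(2)[OF D] y]
    sum_card_cnbhd_Int[OF G gamma_setD(2)[OF D]] gamma_setD(3)[OF D] assms(4-6) by simp

theorem theorem3p9:
  fixes V :: "'a set" and E :: "'a \<Rightarrow> 'a \<Rightarrow> bool"
  assumes G: "simple_graph V E"
    and noeff: "\<not> (\<exists>D. efficient_dominating V E D)"
  shows "card V \<le> domination_number V E * (max_degree V E + 1) - 1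
    \<and> (card V = domination_number V E * (max_degree V E + 1) - 1 \<longrightarrow>
           (\<forall>D. gamma_set V E D \<longrightarrow>
              (\<exists>!y. y \<in> V - D \<and> efficient_dominating (del_vert_V V y) (del_vert_E E y) D) \<and>
              (\<forall>y \<in> V - D. efficient_dominating (del_vert_V V y) (del_vert_E E y) D
                   \<longrightarrow> card (nbhd V E y \<inter> D) = 2))
         \<and> (\<forall>v \<in> V. (\<exists>D. gamma_set V E D \<and> v \<in> D) \<longrightarrow> degree V E v = max_degree V E)
         \<and> ((\<forall>v \<in> V. \<exists>D. gamma_set V E D \<and> v \<in> D) \<longrightarrow> regular V E))
    \<and> ((\<exists>D y. gamma_set V E D \<and> y \<in> V - D
              \<and> efficient_dominating (del_vert_V V y) (del_vert_E E y) D
              \<and> card (nbhd V E y \<inter> D) = 2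
              \<and> (\<forall>v \<in> D. degree V E v = max_degree V E))
         \<longrightarrow> card V = domination_number V E * (max_degree V E + 1) - 1)"
proof -
  let ?bound = "domination_number V E * (max_degree V E + 1)"
  obtain D where "gamma_set V E D"
    using gamma_set_exists[OF G] by blast
  then have "Suc (card V) \<le> ?bound"
    using gamma_set_sum_degree_bounds[OF G noeff] by (meson le_trans)
  then have "card V \<le> ?bound - 1"
    and extremal_iff: "card V = ?bound - 1 \<longleftrightarrow> Suc (card V) = ?bound"
    by linarith+
  show ?thesis
  proof (intro conjI impI)
    show "card V \<le> ?bound - 1" by fact
  next
    assume "card V = ?bound - 1"
    then have extremal: "Suc (card V) = ?bound"
      using extremal_iff by blast
    note degree = extremal_degree_eq_max_degree[OF G noeff extremal]
    show "\<forall>D. gamma_set V E D \<longrightarrow>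
        (\<exists>!y. y \<in> V - D \<and> efficient_dominating (del_vert_V V y) (del_vert_E E y) D) \<and>
        (\<forall>y \<in> V - D. efficient_dominating (del_vert_V V y) (del_vert_E E y) D
          \<longrightarrow> card (nbhd V E y \<inter> D) = 2)"
      using extremal_ex1_del_vert_efficient[OF G noeff extremal]
        extremal_card_nbhd_Int_eq_2[OF G noeff extremal] by blast
    show "\<forall>v \<in> V. (\<exists>D. gamma_set V E D \<and> v \<in> D) \<longrightarrow> degree V E v = max_degree V E"
      using degree by blast
    show "regular V E" if "\<forall>v \<in> V. \<exists>D. gamma_set V E D \<and> v \<in> D"
      using that degree unfolding regular_def by metis
  next
    assume "\<exists>D y. gamma_set V E D \<and> y \<in> V - D
      \<and> efficient_dominating (del_vert_V V y) (del_vert_E E y) D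
      \<and> card (nbhd V E y \<inter> D) = 2 \<and> (\<forall>v \<in> D. degree V E v = max_degree V E)"
    then show "card V = ?bound - 1"
      using extremal_if_del_vert_efficient[OF G] extremal_iff by blast
  qed
qed

end
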